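(* Consider the problem $\min f(x)$ subject to $x\in\mathcal{F}\cap\mathcal{Z}\cap X$, where $\mathcal{F}=\{x:g(x)\le0\}$, and the penalized problem $\min\{P(x;\varepsilon): x\in X\cap\mathcal{Z}\}$ with $P(x;\varepsilon)=f(x)+\frac1\varepsilon\sum_{i=1}^m\max\{0,g_i(x)\}$. Suppose EMFCQ (see context) holds. Then there is $\varepsilon^\star>0$ such that for every $\varepsilon\in(0,\varepsilon^\star]$, every stationary point of the penalized problem is a KKT stationary point of the constrained problem.
   Context: $\{1,\dots,n\}=I^c\cup I^z$, $I^c\cap I^z=\emptyset$; $v_c=(v_i)_{i\in I^c}$, $v_z=(v_i)_{i\in I^z}$. $l,u\in\mathbb{R}^n$ finite, $l_i<u_i$, $l_i,u_i\in\mathbb{Z}$ for $i\in I^z$; $X=\{x:l\le x\le u\}$, $\mathcal{Z}=\{x: x_i\in\mathbb{Z}\ \forall i\in I^z\}$. $f$ and $g=(g_1,\dots,g_m)$ are Lipschitz continuous w.r.t. the continuous variables: $|h(x)-h(y)|\le L\|x-y\|$ for $h\in\{f,g_1,\dots,g_m\}$ whenever $x_z=y_z$. A vector in $\mathbb{Z}^p$ is primitive if the gcd of its components is 1. For $x\in X\cap\mathcal{Z}$: $D^z(x)=\{d\in\mathbb{Z}^n: d_i=0\ (i\in I^c),\ d_z\text{ primitive},\ x+d\in X\cap\mathcal{Z}\}$, $\mathcal{B}^z(x)=\{x+d: d\in D^z(x)\}$, $D^c(x)=\{s: s_i=0\ (i\in I^z),\ s_i\ge0 \text{ if } i\in I^c,x_i=l_i,\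 s_i\le0\text{ if } i\in I^c,x_i=u_i\}$. For $h$ Lipschitz w.r.t. continuous variables and $s$ with $s_z=0$: $h^{Cl}_{x_c}(x;s)=\limsup_{y_c\to x_c,\,y_z=x_z,\,t\downarrow0}\frac{h(y+ts)-h(y)}{t}$, $\partial_c h(x)=\{v: v_z=0,\ h^{Cl}_{x_c}(x;s)\ge s^\top v\ \forall s \text{ with } s_z=0\}$. Clarke–Jahn derivative: for $x\in X\cap\mathcal{Z}$, $s\in D^c(x)$, $P^\circ_c(x;\varepsilon,s)=\limsup\frac{P(y+ts;\varepsilon)-P(y;\varepsilon)}{t}$ as $y_c\to x_c$, $t\downarrow0$ with $y_z=x_z$, $y\in X\cap\mathcal{Z}$, $y+ts\in X\cap\mathcal{Z}$. A stationary point of the penalized problem is $x\in X\cap\mathcal{Z}$ with $P^\circ_c(x;\varepsilon,s)\ge0$ for all $s\in D^c(x)$ and $P(x;\varepsilon)\le P(y;\varepsilon)$ for all $y\in\mathcal{B}^z(x)$. KKT stationary point of the constrained problem: $x^*\in\mathcal{F}\cap\mathcal{Z}\cap X$ for which there is $\lambda\in\mathbb{R}^m$ with $\lambda\ge0$, $\lambda^\top g(x^* )=0$, $\max\{\xi^\top s: \xi\in\partial_c f(x^* )+\sum_{i=1}^m\lambda_i\partial_c g_i(x^* )\}\ge0$ for every $s\in D^c(x^* )$, and $f(x^* )\le f(x)$ for all $x\in\mathcal{B}^z(x^* )\cap\mathcal{F}$. EMFCQ: for every $x\in(X\cap\mathcal{Z})\setminus\operatorname{int}\mathcal{F}$, either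 (i) there is $s\in D^c(x)$ with $\xi^\top s<0$ for all $\xi\in\partial_c g_i(x)$ and all $i$ with $g_i(x)\ge0$; or (ii) there is $\bar d\in D^z(x)$ with $\sum_{i}\max\{0,g_i(x+\bar d)\}<\sum_{i}\max\{0,g_i(x)\}$. *)

theory Defs
  imports "HOL-Analysis.Analysis"
begin

text \<open>Variables live in real^'n; Iz is the set of integer indices, the continuous
  indices are the complement UNIV - Iz.\<close>

definition boxX :: "real^'n \<Rightarrow> real^'n \<Rightarrow> (real^'n) set" where
  "boxX l u = {x. \<forall>i. l$i \<le> x$i \<and> x$i \<le> u$i}"

definition intset :: "'n set \<Rightarrow> (real^'n) set" where
  "intset Iz = {x. \<forall>i\<in>Iz. x$i \<in> \<int>}"

definition same_int_part :: "'n set \<Rightarrow> real^'n \<Rightarrow> real^'n \<Rightarrow> bool" where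
  "same_int_part Iz x y \<longleftrightarrow> (\<forall>i\<in>Iz. x$i = y$i)"

definition primitive_on :: "'n set \<Rightarrow> real^'n \<Rightarrow> bool" where
  "primitive_on Iz d \<longleftrightarrow> (\<forall>i\<in>Iz. d$i \<in> \<int>) \<and> Gcd ((\<lambda>i. \<lfloor>d$i\<rfloor>) ` Iz) = (1::int)"

definition Dz :: "'n set \<Rightarrow> real^'n \<Rightarrow> real^'n \<Rightarrow> real^'n \<Rightarrow> (real^'n) set" where
  "Dz Iz l u x = {d. (\<forall>i. d$i \<in> \<int>) \<and> (\<forall>i\<in>UNIV - Iz. d$i = 0) \<and> primitive_on Iz d
                    \<and> x + d \<in> boxX l u \<inter> intset Iz}"

definition Bz :: "'n set \<Rightarrow> real^'n \<Rightarrow> real^'n \<Rightarrow> real^'n \<Rightarrow> (real^'n) set" where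
  "Bz Iz l u x = (\<lambda>d. x + d) ` Dz Iz l u x"

definition Dc :: "'n set \<Rightarrow> real^'n \<Rightarrow> real^'n \<Rightarrow> real^'n \<Rightarrow> (real^'n) set" where
  "Dc Iz l u x = {s. (\<forall>i\<in>Iz. s$i = 0)
                    \<and> (\<forall>i\<in>UNIV - Iz. x$i = l$i \<longrightarrow> s$i \<ge> 0)
                    \<and> (\<forall>i\<in>UNIV - Iz. x$i = u$i \<longrightarrow> s$i \<le> 0)}"

definition clarke_c :: "'n set \<Rightarrow> (real^'n \<Rightarrow> real) \<Rightarrow> real^'n \<Rightarrow> real^'n \<Rightarrow> ereal" where
  "clarke_c Iz h x s =
     Limsup ((inf (nhds x) (principal {y. same_int_part Iz y x})) \<times>\<^sub>F at_right (0::real))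
            (\<lambda>(y,t). ereal ((h (y + t *\<^sub>R s) - h y) / t))"

definition subdiff_c :: "'n set \<Rightarrow> (real^'n \<Rightarrow> real) \<Rightarrow> real^'n \<Rightarrow> (real^'n) set" where
  "subdiff_c Iz h x = {v. (\<forall>i\<in>Iz. v$i = 0) \<and>
      (\<forall>s. (\<forall>i\<in>Iz. s$i = 0) \<longrightarrow> clarke_c Iz h x s \<ge> ereal (s \<bullet> v))}"

definition penalty :: "(real^'n \<Rightarrow> real) \<Rightarrow> (nat \<Rightarrow> real^'n \<Rightarrow> real) \<Rightarrow> nat \<Rightarrow> real \<Rightarrow> real^'n \<Rightarrow> real" where
  "penalty f g m \<epsilon> x = f x + (1 / \<epsilon>) * (\<Sum>i=1..m. max 0 (g i x))"

definition clarke_jahn :: "'n set \<Rightarrow> real^'n \<Rightarrow> real^'n \<Rightarrow> (real^'n \<Rightarrow> real) \<Rightarrow> real^'n \<Rightarrow> real^'n \<Rightarrow> ereal" where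
  "clarke_jahn Iz l u P x s =
     Limsup (inf ((inf (nhds x) (principal {y. same_int_part Iz y x})) \<times>\<^sub>F at_right (0::real))
                 (principal {(y,t). y \<in> boxX l u \<inter> intset Iz \<and> y + t *\<^sub>R s \<in> boxX l u \<inter> intset Iz}))
            (\<lambda>(y,t). ereal ((P (y + t *\<^sub>R s) - P y) / t))"

definition stationary_pen :: "'n set \<Rightarrow> real^'n \<Rightarrow> real^'n \<Rightarrow> (real^'n \<Rightarrow> real) \<Rightarrow> (nat \<Rightarrow> real^'n \<Rightarrow> real) \<Rightarrow> nat \<Rightarrow> real \<Rightarrow> real^'n \<Rightarrow> bool" where
  "stationary_pen Iz l u f g m \<epsilon> x \<longleftrightarrow>
     x \<in> boxX l u \<inter> intset Iz \<and>
     (\<forall>s\<in>Dc Iz l u x. clarke_jahn Iz l u (penalty f g m \<epsilon>) x s \<ge> 0) \<and>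
     (\<forall>y\<in>Bz Iz l u x. penalty f g m \<epsilon> x \<le> penalty f g m \<epsilon> y)"

definition feasF :: "(nat \<Rightarrow> real^'n \<Rightarrow> real) \<Rightarrow> nat \<Rightarrow> (real^'n) set" where
  "feasF g m = {x. \<forall>i\<in>{1..m}. g i x \<le> 0}"

definition kkt_point :: "'n set \<Rightarrow> real^'n \<Rightarrow> real^'n \<Rightarrow> (real^'n \<Rightarrow> real) \<Rightarrow> (nat \<Rightarrow> real^'n \<Rightarrow> real) \<Rightarrow> nat \<Rightarrow> real^'n \<Rightarrow> bool" where
  "kkt_point Iz l u f g m x \<longleftrightarrow>
     x \<in> feasF g m \<inter> intset Iz \<inter> boxX l u \<and>
     (\<exists>lam::nat \<Rightarrow> real. (\<forall>i\<in>{1..m}. lam i \<ge> 0) \<and> (\<Sum>i=1..m. lam i * g i x) = 0 \<and>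
        (\<forall>s\<in>Dc Iz l u x. \<exists>\<xi>0\<in>subdiff_c Iz f x. \<exists>\<xi>::nat \<Rightarrow> real^'n.
            (\<forall>i\<in>{1..m}. \<xi> i \<in> subdiff_c Iz (g i) x) \<and>
            (\<xi>0 + (\<Sum>i=1..m. lam i *\<^sub>R \<xi> i)) \<bullet> s \<ge> 0)) \<and>
     (\<forall>y\<in>Bz Iz l u x \<inter> feasF g m. f x \<le> f y)"

definition EMFCQ :: "'n set \<Rightarrow> real^'n \<Rightarrow> real^'n \<Rightarrow> (nat \<Rightarrow> real^'n \<Rightarrow> real) \<Rightarrow> nat \<Rightarrow> bool" where
  "EMFCQ Iz l u g m \<longleftrightarrow>
     (\<forall>x\<in>(boxX l u \<inter> intset Iz) - interior (feasF g m).
        (\<exists>s\<in>Dc Iz l u x. \<forall>i\<in>{1..m}. g i x \<ge> 0 \<longrightarrow> (\<forall>\<xi>\<in>subdiff_c Iz (g i) x. \<xi> \<bullet> s < 0)) \<or>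
        (\<exists>d\<in>Dz Iz l u x. (\<Sum>i=1..m. max 0 (g i (x + d))) < (\<Sum>i=1..m. max 0 (g i x))))"

end

(*
  A feasible stationary point of the penalty function is a KKT point: only the active
  constraints enter the Clarke--Jahn derivative of the penalty, so the Clarke derivative of f
  plus 1/\<epsilon> times the positive parts of the Clarke derivatives of the active constraints is
  nonnegative on the cone D^c. These directional derivatives are sublinear, and exact
  penalization of sublinear functions on a convex cone replaces the positive parts by
  multipliers in [0, 1/\<epsilon>]; a finite-dimensional Hahn--Banach argument realises each Clarke
  derivative by a Clarke subgradient. On feasible points the penalty function equals f, so
  discrete minimality carries over.

  Infeasible stationary points do not exist for small \<epsilon>. Near a point of X \<inter> Z, EMFCQ
  gives either a direction in D^c along which all violated constraints decrease at a uniform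
  rate, which makes the Clarke--Jahn derivative of the penalty negative once 1/\<epsilon> dominates the
  Lipschitz constant of f, or an integer step that decreases the total violation and hence the
  penalty function. Both estimates hold uniformly near the point within its fiber, and
  compactness of X \<inter> Z yields a single threshold for \<epsilon>.
*)
theory Submission
  imports Defs
begin

section \<open>Fibers and the Clarke filter\<close>

definition fiber_nhds :: "'n::finite set \<Rightarrow> real^'n \<Rightarrow> (real^'n) filter" where
  "fiber_nhds Iz x = inf (nhds x) (principal {y. same_int_part Iz y x})"

definition clarke_filter :: "'n::finite set \<Rightarrow> real^'n \<Rightarrow> ((real^'n) \<times> real) filter" where
  "clarke_filter Iz x = fiber_nhds Iz x \<times>\<^sub>F at_right 0"

definition cont_dirs :: "'n::finite set \<Rightarrow> (real^'n) set" where
  "cont_dirs Iz = {s. \<forall>i\<in>Iz. s$i = 0}"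

definition lipschitz_on_fibers :: "'n::finite set \<Rightarrow> (real^'n \<Rightarrow> real) \<Rightarrow> real \<Rightarrow> bool" where
  "lipschitz_on_fibers Iz h L \<longleftrightarrow> (\<forall>x y. same_int_part Iz x y \<longrightarrow> \<bar>h x - h y\<bar> \<le> L * norm (x - y))"

definition diff_quot :: "('a::real_vector \<Rightarrow> real) \<Rightarrow> 'a \<Rightarrow> 'a \<times> real \<Rightarrow> real" where
  "diff_quot h s = (\<lambda>(y, t). (h (y + t *\<^sub>R s) - h y) / t)"

lemma same_int_part_refl [simp]: "same_int_part Iz x x"
  by (simp add: same_int_part_def)

lemma same_int_part_trans: "same_int_part Iz x y \<Longrightarrow> same_int_part Iz y z \<Longrightarrow> same_int_part Iz x z"
  by (simp add: same_int_part_def)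

lemma same_int_part_add_cont_dir [simp]:
  "s \<in> cont_dirs Iz \<Longrightarrow> same_int_part Iz (y + t *\<^sub>R s) z \<longleftrightarrow> same_int_part Iz y z"
  by (simp add: same_int_part_def cont_dirs_def)

lemma same_int_part_translate [simp]:
  "same_int_part Iz (y + d) (x + d) \<longleftrightarrow> same_int_part Iz y x"
  by (simp add: same_int_part_def)

lemma eventually_fiber_nhds:
  "eventually P (fiber_nhds Iz x) \<longleftrightarrow> (\<exists>U. open U \<and> x \<in> U \<and> (\<forall>y\<in>U. same_int_part Iz y x \<longrightarrow> P y))"
  unfolding fiber_nhds_def eventually_inf_principal eventually_nhds by simp

lemma fiber_nhds_neq_bot: "fiber_nhds Iz x \<noteq> bot"
  unfolding trivial_limit_def eventually_fiber_nhds by (metis same_int_part_refl)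

lemma fiber_nhds_le_nhds: "fiber_nhds Iz x \<le> nhds x"
  by (simp add: fiber_nhds_def)

lemma eventually_same_int_part_fiber_nhds: "eventually (\<lambda>y. same_int_part Iz y x) (fiber_nhds Iz x)"
  by (simp add: fiber_nhds_def eventually_inf_principal)

lemma filterlim_fiber_nhdsI:
  assumes "(f \<longlongrightarrow> x) F" and "eventually (\<lambda>z. same_int_part Iz (f z) x) F"
  shows "filterlim f (fiber_nhds Iz x) F"
  using assms by (simp add: fiber_nhds_def filterlim_inf filterlim_principal)

lemma tendsto_ident_fiber_nhds: "((\<lambda>y. y) \<longlongrightarrow> x) (fiber_nhds Iz x)"
  by (rule tendsto_mono[OF fiber_nhds_le_nhds filterlim_ident])

lemma filterlim_translate_fiber_nhds:
  "filterlim (\<lambda>y. y + d) (fiber_nhds Iz (x + d)) (fiber_nhds Iz x)"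
  by (intro filterlim_fiber_nhdsI tendsto_intros tendsto_ident_fiber_nhds)
     (simp add: eventually_same_int_part_fiber_nhds)

text \<open>Points of Z with different integer parts are at distance at least 1.\<close>
lemma eventually_intset_same_int_part:
  assumes "x \<in> intset Iz"
  shows "eventually (\<lambda>y. y \<in> intset Iz \<longrightarrow> same_int_part Iz y x) (nhds x)"
  unfolding eventually_nhds_metric
proof (intro exI[of _ 1] conjI allI impI)
  fix y assume dist: "dist y x < 1" and y: "y \<in> intset Iz"
  show "same_int_part Iz y x"
    unfolding same_int_part_def
  proof
    fix i assume i: "i \<in> Iz"
    have "\<bar>y$i - x$i\<bar> < 1"
      using le_less_trans[OF dist_vec_nth_le[of y i x] dist] by (simp add: dist_real_def)
    moreover have "y$i - x$i \<in> \<int>" using y assms i by (simp add: intset_def)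
    ultimately show "y$i = x$i" using Ints_nonzero_abs_less1 by fastforce
  qed
qed simp

lemma eventually_nhds_of_fiber_nhds:
  assumes "x \<in> intset Iz" and "eventually P (fiber_nhds Iz x)"
  shows "eventually (\<lambda>y. y \<in> intset Iz \<longrightarrow> P y) (nhds x)"
  using eventually_intset_same_int_part[OF assms(1)] assms(2)
  unfolding fiber_nhds_def eventually_inf_principal
  by eventually_elim blast

lemma lipschitz_on_fibers_tendsto:
  assumes "lipschitz_on_fibers Iz h L"
  shows "(h \<longlongrightarrow> h x) (fiber_nhds Iz x)"
proof -
  have "eventually (\<lambda>y. norm (h y - h x) \<le> \<bar>L\<bar> * norm (y - x)) (fiber_nhds Iz x)"
    using eventually_same_int_part_fiber_nhds
  proof eventually_elim
    case (elim y)
    then have "\<bar>h y - h x\<bar> \<le> L * norm (y - x)"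
      using assms by (simp add: lipschitz_on_fibers_def)
    also have "\<dots> \<le> \<bar>L\<bar> * norm (y - x)" by (simp add: mult_right_mono)
    finally show ?case by simp
  qed
  moreover have "((\<lambda>y. \<bar>L\<bar> * norm (y - x)) \<longlongrightarrow> 0) (fiber_nhds Iz x)"
    using tendsto_ident_fiber_nhds
    by (intro tendsto_mult_right_zero tendsto_norm_zero) (simp add: LIM_zero_iff)
  ultimately have "((\<lambda>y. h y - h x) \<longlongrightarrow> 0) (fiber_nhds Iz x)"
    by (rule Lim_null_comparison)
  then show ?thesis by (simp add: LIM_zero_iff)
qed

lemma clarke_filter_neq_bot: "clarke_filter Iz x \<noteq> bot"
  by (simp add: clarke_filter_def prod_filter_eq_bot fiber_nhds_neq_bot)

lemma filterlim_fst_clarke_filter: "filterlim fst (fiber_nhds Iz x) (clarke_filter Iz x)"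
  by (simp add: filterlim_def clarke_filter_def filtermap_fst_prod_filter)

lemma filterlim_snd_clarke_filter: "filterlim snd (at_right 0) (clarke_filter Iz x)"
  by (simp add: filterlim_def clarke_filter_def filtermap_snd_prod_filter)

lemma eventually_snd_pos_clarke_filter: "eventually (\<lambda>(y, t). 0 < t) (clarke_filter Iz x)"
  unfolding case_prod_unfold
  by (rule eventually_compose_filterlim[OF eventually_at_right_less filterlim_snd_clarke_filter])

lemma filterlim_clarke_filter_endpoint:
  assumes "s \<in> cont_dirs Iz"
  shows "filterlim (\<lambda>(y, t). y + t *\<^sub>R s) (fiber_nhds Iz x) (clarke_filter Iz x)"
proof (rule filterlim_fiber_nhdsI)
  have "(fst \<longlongrightarrow> x) (clarke_filter Iz x)"
    using filterlim_compose[OF tendsto_ident_fiber_nhds filterlim_fst_clarke_filter[of Iz x]] by simp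
  moreover have "(snd \<longlongrightarrow> 0) (clarke_filter Iz x)"
    using filterlim_snd_clarke_filter[of Iz x] by (rule filterlim_mono) (simp_all add: at_within_le_nhds)
  ultimately have "((\<lambda>z. fst z + snd z *\<^sub>R s) \<longlongrightarrow> x + 0 *\<^sub>R s) (clarke_filter Iz x)"
    by (intro tendsto_intros)
  then show "((\<lambda>(y, t). y + t *\<^sub>R s) \<longlongrightarrow> x) (clarke_filter Iz x)"
    by (simp add: case_prod_unfold)
  show "eventually (\<lambda>z. same_int_part Iz (case z of (y, t) \<Rightarrow> y + t *\<^sub>R s) x) (clarke_filter Iz x)"
    using eventually_compose_filterlim[OF eventually_same_int_part_fiber_nhds filterlim_fst_clarke_filter]
    by (simp add: case_prod_unfold assms)
qed

lemma filterlim_clarke_filter_shift: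
  assumes "s \<in> cont_dirs Iz"
  shows "filterlim (\<lambda>(y, t). (y + t *\<^sub>R s, t)) (clarke_filter Iz x) (clarke_filter Iz x)"
  using filterlim_Pair[OF filterlim_clarke_filter_endpoint[OF assms] filterlim_snd_clarke_filter]
  by (simp add: case_prod_unfold clarke_filter_def)

lemma filterlim_clarke_filter_rescale:
  assumes "0 < a"
  shows "filterlim (\<lambda>(y, t). (y, a * t)) (clarke_filter Iz x) (clarke_filter Iz x)"
proof -
  have "filterlim (\<lambda>t. a * t) (at_right 0) (at_right (0::real))"
    unfolding filterlim_at using assms
    by (auto intro!: tendsto_mult_right_zero eventually_mono[OF eventually_at_right_less]
        simp: at_within_le_nhds tendsto_mono[OF at_within_le_nhds filterlim_ident])
  then have "filterlim (\<lambda>z. a * snd z) (at_right 0) (clarke_filter Iz x)"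
    using filterlim_snd_clarke_filter by (rule filterlim_compose)
  from filterlim_Pair[OF filterlim_fst_clarke_filter this] show ?thesis
    by (simp add: case_prod_unfold clarke_filter_def)
qed

lemma eventually_clarke_filter_nearby:
  assumes "eventually P (clarke_filter Iz x)"
  shows "eventually (\<lambda>y. eventually P (clarke_filter Iz y)) (fiber_nhds Iz x)"
proof -
  obtain Pf Pg where Pf: "eventually Pf (fiber_nhds Iz x)" and Pg: "eventually Pg (at_right 0)"
    and P: "\<And>y t. Pf y \<Longrightarrow> Pg t \<Longrightarrow> P (y, t)"
    using assms unfolding clarke_filter_def eventually_prod_filter by blast
  obtain U where U: "open U" "x \<in> U" "\<And>y. y \<in> U \<Longrightarrow> same_int_part Iz y x \<Longrightarrow> Pf y"
    using Pf unfolding eventually_fiber_nhds by blast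
  have "eventually P (clarke_filter Iz y)" if "y \<in> U" "same_int_part Iz y x" for y
  proof -
    have "eventually Pf (fiber_nhds Iz y)"
      unfolding eventually_fiber_nhds using U that by (blast intro: same_int_part_trans)
    then show ?thesis
      unfolding clarke_filter_def eventually_prod_filter using Pg P by blast
  qed
  then show ?thesis unfolding eventually_fiber_nhds using U by blast
qed

section \<open>Clarke directional derivatives\<close>

text \<open>The coercion real_of_ereal is harmless: for fiberwise Lipschitz functions the Clarke
  derivative is finite (clarke_c_eq_clarke_dir).\<close>
definition clarke_dir :: "'n::finite set \<Rightarrow> (real^'n \<Rightarrow> real) \<Rightarrow> real^'n \<Rightarrow> real^'n \<Rightarrow> real" where
  "clarke_dir Iz h x s = real_of_ereal (clarke_c Iz h x s)"

lemma clarke_c_eq_Limsup: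
  "clarke_c Iz h x s = Limsup (clarke_filter Iz x) (\<lambda>yt. ereal (diff_quot h s yt))"
  by (simp add: clarke_c_def clarke_filter_def fiber_nhds_def diff_quot_def case_prod_unfold)

lemma cont_dirs_add: "s1 \<in> cont_dirs Iz \<Longrightarrow> s2 \<in> cont_dirs Iz \<Longrightarrow> s1 + s2 \<in> cont_dirs Iz"
  by (simp add: cont_dirs_def)

lemma cont_dirs_scaleR: "s \<in> cont_dirs Iz \<Longrightarrow> a *\<^sub>R s \<in> cont_dirs Iz"
  by (simp add: cont_dirs_def)

lemma diff_quot_add_dir:
  "diff_quot h (s1 + s2) (y, t) = diff_quot h s2 (y + t *\<^sub>R s1, t) + diff_quot h s1 (y, t)"
  by (simp add: diff_quot_def scaleR_add_right add.assoc add_divide_distrib[symmetric])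

lemma diff_quot_scaleR_dir:
  "a \<noteq> 0 \<Longrightarrow> diff_quot h (a *\<^sub>R s) (y, t) = a * diff_quot h s (y, a * t)"
  by (simp add: diff_quot_def mult.commute)

lemma diff_quot_le_lipschitz:
  assumes "lipschitz_on_fibers Iz h L" "s \<in> cont_dirs Iz" "0 < t"
  shows "diff_quot h s (y, t) \<le> L * norm s" and "- (L * norm s) \<le> diff_quot h s (y, t)"
proof -
  have "same_int_part Iz (y + t *\<^sub>R s) y" using assms(2) by simp
  then have "\<bar>h (y + t *\<^sub>R s) - h y\<bar> \<le> L * norm (y + t *\<^sub>R s - y)"
    using assms(1) unfolding lipschitz_on_fibers_def by blast
  then have "\<bar>diff_quot h s (y, t)\<bar> \<le> L * norm s"
    using \<open>0 < t\<close> by (simp add: diff_quot_def divide_le_eq mult.commute mult.left_commute)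
  then show "diff_quot h s (y, t) \<le> L * norm s" and "- (L * norm s) \<le> diff_quot h s (y, t)"
    by linarith+
qed

lemma eventually_diff_quot_le_lipschitz:
  assumes "lipschitz_on_fibers Iz h L" "s \<in> cont_dirs Iz"
  shows "eventually (\<lambda>yt. diff_quot h s yt \<le> L * norm s) (clarke_filter Iz x)"
    and "eventually (\<lambda>yt. - (L * norm s) \<le> diff_quot h s yt) (clarke_filter Iz x)"
  using eventually_snd_pos_clarke_filter[of Iz x] diff_quot_le_lipschitz[OF assms]
  by (auto simp: case_prod_unfold elim!: eventually_mono)

lemma clarke_c_eq_clarke_dir:
  assumes "lipschitz_on_fibers Iz h L" "s \<in> cont_dirs Iz"
  shows "clarke_c Iz h x s = ereal (clarke_dir Iz h x s)"
proof -
  have "clarke_c Iz h x s \<le> ereal (L * norm s)"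
    unfolding clarke_c_eq_Limsup
    using eventually_diff_quot_le_lipschitz(1)[OF assms] by (auto intro!: Limsup_bounded elim: eventually_mono)
  moreover have "ereal (- (L * norm s)) \<le> clarke_c Iz h x s"
    unfolding clarke_c_eq_Limsup
    using eventually_diff_quot_le_lipschitz(2)[OF assms]
    by (auto intro!: le_Limsup clarke_filter_neq_bot elim: eventually_mono)
  ultimately show ?thesis
    unfolding clarke_dir_def by (cases "clarke_c Iz h x s") auto
qed

lemma eventually_diff_quot_less:
  assumes "lipschitz_on_fibers Iz h L" "s \<in> cont_dirs Iz" "clarke_dir Iz h x s < b"
  shows "eventually (\<lambda>yt. diff_quot h s yt < b) (clarke_filter Iz x)"
proof -
  have "Limsup (clarke_filter Iz x) (\<lambda>yt. ereal (diff_quot h s yt)) < ereal b"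
    using assms by (simp add: clarke_c_eq_clarke_dir flip: clarke_c_eq_Limsup)
  from Limsup_lessD[OF this] show ?thesis by simp
qed

lemma clarke_dir_le:
  assumes "lipschitz_on_fibers Iz h L" "s \<in> cont_dirs Iz"
    and "\<And>e. 0 < e \<Longrightarrow> eventually (\<lambda>yt. diff_quot h s yt \<le> a + e) (clarke_filter Iz x)"
  shows "clarke_dir Iz h x s \<le> a"
proof -
  have "clarke_c Iz h x s \<le> ereal a"
  proof (rule ereal_le_epsilon2)
    fix e :: real assume "0 < e"
    show "clarke_c Iz h x s \<le> ereal a + ereal e"
      unfolding clarke_c_eq_Limsup
      by (rule Limsup_bounded) (use assms(3)[OF \<open>0 < e\<close>] in \<open>auto elim: eventually_mono\<close>)
  qed
  then show ?thesis using clarke_c_eq_clarke_dir[OF assms(1,2)] by simp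
qed

lemma clarke_dir_add_le:
  assumes L: "lipschitz_on_fibers Iz h L" and s: "s1 \<in> cont_dirs Iz" "s2 \<in> cont_dirs Iz"
  shows "clarke_dir Iz h x (s1 + s2) \<le> clarke_dir Iz h x s1 + clarke_dir Iz h x s2"
proof (rule clarke_dir_le[OF L cont_dirs_add[OF s]])
  fix e :: real assume "0 < e"
  have "eventually (\<lambda>yt. diff_quot h s1 yt < clarke_dir Iz h x s1 + e/2) (clarke_filter Iz x)"
    using \<open>0 < e\<close> by (intro eventually_diff_quot_less[OF L s(1)]) simp
  moreover have "eventually (\<lambda>yt. diff_quot h s2 yt < clarke_dir Iz h x s2 + e/2) (clarke_filter Iz x)"
    using \<open>0 < e\<close> by (intro eventually_diff_quot_less[OF L s(2)]) simp
  from eventually_compose_filterlim[OF this filterlim_clarke_filter_shift[OF s(1)]]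
  have "eventually (\<lambda>(y, t). diff_quot h s2 (y + t *\<^sub>R s1, t) < clarke_dir Iz h x s2 + e/2)
      (clarke_filter Iz x)"
    by (simp add: case_prod_unfold)
  ultimately show "eventually (\<lambda>yt. diff_quot h (s1 + s2) yt
      \<le> clarke_dir Iz h x s1 + clarke_dir Iz h x s2 + e) (clarke_filter Iz x)"
    by eventually_elim (auto simp: diff_quot_add_dir)
qed

lemma clarke_dir_scaleR_le:
  assumes L: "lipschitz_on_fibers Iz h L" and s: "s \<in> cont_dirs Iz" and a: "0 < a"
  shows "clarke_dir Iz h x (a *\<^sub>R s) \<le> a * clarke_dir Iz h x s"
proof (rule clarke_dir_le[OF L cont_dirs_scaleR[OF s]])
  fix e :: real assume "0 < e"
  have "eventually (\<lambda>yt. diff_quot h s yt < clarke_dir Iz h x s + e / a) (clarke_filter Iz x)"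
    using \<open>0 < e\<close> a by (intro eventually_diff_quot_less[OF L s]) simp
  from eventually_compose_filterlim[OF this filterlim_clarke_filter_rescale[OF a]]
  have "eventually (\<lambda>(y, t). diff_quot h s (y, a * t) < clarke_dir Iz h x s + e / a)
      (clarke_filter Iz x)"
    by (simp add: case_prod_unfold)
  then show "eventually (\<lambda>yt. diff_quot h (a *\<^sub>R s) yt \<le> a * clarke_dir Iz h x s + e)
      (clarke_filter Iz x)"
  proof eventually_elim
    case (elim yt)
    obtain y t where yt: "yt = (y, t)" by fastforce
    have "diff_quot h (a *\<^sub>R s) yt = a * diff_quot h s (y, a * t)"
      using a by (simp add: yt diff_quot_scaleR_dir)
    also have "\<dots> < a * (clarke_dir Iz h x s + e / a)"
      using elim a by (simp add: yt)
    also have "\<dots> = a * clarke_dir Iz h x s + e"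
      using a by (simp add: field_simps)
    finally show ?case by simp
  qed
qed

lemma clarke_dir_scaleR:
  assumes L: "lipschitz_on_fibers Iz h L" and s: "s \<in> cont_dirs Iz" and a: "0 < a"
  shows "clarke_dir Iz h x (a *\<^sub>R s) = a * clarke_dir Iz h x s"
proof -
  have "clarke_dir Iz h x s = clarke_dir Iz h x (inverse a *\<^sub>R (a *\<^sub>R s))"
    using a by simp
  also have "\<dots> \<le> inverse a * clarke_dir Iz h x (a *\<^sub>R s)"
    using a by (intro clarke_dir_scaleR_le[OF L cont_dirs_scaleR[OF s]]) simp
  finally have "a * clarke_dir Iz h x s \<le> clarke_dir Iz h x (a *\<^sub>R s)"
    using a by (simp add: field_simps)
  with clarke_dir_scaleR_le[OF L s a, of x] show ?thesis by linarith
qed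

lemma clarke_dir_zero [simp]: "clarke_dir Iz h x 0 = 0"
  by (simp add: clarke_dir_def clarke_c_eq_Limsup diff_quot_def case_prod_unfold
      Limsup_const clarke_filter_neq_bot zero_ereal_def)

section \<open>Sublinear functions and exact penalization\<close>

definition sublinear_on :: "'a::real_vector set \<Rightarrow> ('a \<Rightarrow> real) \<Rightarrow> bool" where
  "sublinear_on C p \<longleftrightarrow>
     (\<forall>s1\<in>C. \<forall>s2\<in>C. p (s1 + s2) \<le> p s1 + p s2) \<and> (\<forall>s\<in>C. \<forall>a>0. p (a *\<^sub>R s) = a * p s)"

lemma sublinear_onD:
  assumes "sublinear_on C p"
  shows "s1 \<in> C \<Longrightarrow> s2 \<in> C \<Longrightarrow> p (s1 + s2) \<le> p s1 + p s2"
    and "s \<in> C \<Longrightarrow> 0 < a \<Longrightarrow> p (a *\<^sub>R s) = a * p s"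
  using assms by (auto simp: sublinear_on_def)

lemma sublinear_on_subset: "sublinear_on C p \<Longrightarrow> D \<subseteq> C \<Longrightarrow> sublinear_on D p"
  unfolding sublinear_on_def by blast

lemma sublinear_on_zero: "sublinear_on UNIV p \<Longrightarrow> p 0 = 0"
  using sublinear_onD(2)[of UNIV p 0 2] by simp

lemma sublinear_on_add:
  assumes "sublinear_on C p" "sublinear_on C q"
  shows "sublinear_on C (\<lambda>s. p s + q s)"
proof -
  have "p (s1 + s2) + q (s1 + s2) \<le> (p s1 + q s1) + (p s2 + q s2)" if "s1 \<in> C" "s2 \<in> C" for s1 s2
    using sublinear_onD(1)[OF assms(1) that] sublinear_onD(1)[OF assms(2) that] by linarith
  then show ?thesis using assms by (auto simp: sublinear_on_def distrib_left)
qed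

lemma sublinear_on_scale: "sublinear_on C p \<Longrightarrow> 0 \<le> c \<Longrightarrow> sublinear_on C (\<lambda>s. c * p s)"
  unfolding sublinear_on_def by (auto simp: distrib_left[symmetric] intro: mult_left_mono)

lemma sublinear_on_max0: "sublinear_on C p \<Longrightarrow> sublinear_on C (\<lambda>s. max 0 (p s))"
  unfolding sublinear_on_def by (auto simp: max_mult_distrib_left) (smt (verit))+

lemma sublinear_on_sum:
  "finite A \<Longrightarrow> (\<And>i. i \<in> A \<Longrightarrow> sublinear_on C (p i)) \<Longrightarrow> sublinear_on C (\<lambda>s. \<Sum>i\<in>A. p i s)"
proof (induction A rule: finite_induct)
  case empty
  then show ?case by (simp add: sublinear_on_def)
next
  case (insert a A)
  then show ?case by (simp add: sublinear_on_add)
qed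

lemma sublinear_on_comp_linear:
  "sublinear_on C p \<Longrightarrow> linear P \<Longrightarrow> range P \<subseteq> C \<Longrightarrow> sublinear_on UNIV (p \<circ> P)"
  unfolding sublinear_on_def by (auto simp: linear_add linear_scale image_subset_iff)

lemma convex_strict_epigraph:
  assumes "sublinear_on UNIV p"
  shows "convex {z. p (fst z) < snd z}"
  unfolding convex_def
proof (intro ballI allI impI CollectI)
  fix z1 z2 :: "'a \<times> real" and u v :: real
  assume z: "z1 \<in> {z. p (fst z) < snd z}" "z2 \<in> {z. p (fst z) < snd z}"
    and uv: "0 \<le> u" "0 \<le> v" "u + v = 1"
  have hom: "p (a *\<^sub>R s) \<le> a * p s" if "0 \<le> a" for a s
    using that sublinear_onD(2)[OF assms, of s a] sublinear_on_zero[OF assms]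
    by (cases "a = 0") auto
  have "p (fst (u *\<^sub>R z1 + v *\<^sub>R z2)) \<le> u * p (fst z1) + v * p (fst z2)"
    using sublinear_onD(1)[OF assms, of "u *\<^sub>R fst z1" "v *\<^sub>R fst z2"] hom[OF uv(1)] hom[OF uv(2)]
    by (simp add: add_mono order_trans)
  also have "\<dots> < u * snd z1 + v * snd z2"
  proof (cases "u = 0")
    case False
    then have "u * p (fst z1) < u * snd z1" using uv z by simp
    moreover have "v * p (fst z2) \<le> v * snd z2" using uv z by (intro mult_left_mono) auto
    ultimately show ?thesis by linarith
  qed (use uv z in simp)
  finally show "p (fst (u *\<^sub>R z1 + v *\<^sub>R z2)) < snd (u *\<^sub>R z1 + v *\<^sub>R z2)" by simp
qed

text \<open>Finite-dimensional Hahn--Banach: separate the strict epigraph of p from the ray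
  through (s0, p s0).\<close>
lemma sublinear_separating_functional:
  fixes p :: "'a::euclidean_space \<Rightarrow> real"
  assumes p: "sublinear_on UNIV p"
  shows "\<exists>w \<beta>. \<beta> < 0 \<and> (\<forall>s r. p s < r \<longrightarrow> w \<bullet> s + \<beta> * r \<le> 0) \<and>
           0 \<le> w \<bullet> s0 + \<beta> * p s0"
proof -
  have p0: "p 0 = 0" using sublinear_on_zero[OF p] .
  have ray_hom: "p (t *\<^sub>R s0) = t * p s0" if "0 \<le> t" for t
    using that sublinear_onD(2)[OF p, of s0 t] p0 by (cases "t = 0") auto
  define T where "T = (\<lambda>t. (t *\<^sub>R s0, t * p s0)) ` {0..}"
  have "convex T" unfolding T_def
    by (rule convex_linear_image) (auto intro!: linearI simp: algebra_simps)
  moreover have "(0, 1) \<in> {z. p (fst z) < snd z}" "(0, 0) \<in> T"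
    using p0 by (force simp: T_def)+
  moreover have "{z. p (fst z) < snd z} \<inter> T = {}"
    using ray_hom by (auto simp: T_def)
  ultimately obtain a b where "a \<noteq> 0" and below: "\<forall>z\<in>{z. p (fst z) < snd z}. a \<bullet> z \<le> b"
    and above: "\<forall>z\<in>T. b \<le> a \<bullet> z"
    using separating_hyperplane_sets[OF convex_strict_epigraph[OF p]] by blast
  obtain w \<beta> where a: "a = (w, \<beta>)" by fastforce
  have b0: "b \<le> 0" using above by (force simp: T_def a)
  have epi: "w \<bullet> s + \<beta> * r \<le> 0" if "p s < r" for s r
    using below that b0 by (force simp: a)
  have neg: "\<beta> < 0"
  proof (rule ccontr)
    assume "\<not> \<beta> < 0"
    with epi[of 0 1] p0 have "\<beta> = 0" by simp
    with epi[of w "p w + 1"] have "w \<bullet> w \<le> 0" by simp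
    then have "w = 0" by (metis inner_gt_zero_iff not_le)
    with \<open>\<beta> = 0\<close> \<open>a \<noteq> 0\<close> show False by (simp add: a zero_prod_def)
  qed
  have ray: "0 \<le> w \<bullet> s0 + \<beta> * p s0"
  proof (rule ccontr)
    assume "\<not> 0 \<le> w \<bullet> s0 + \<beta> * p s0"
    define c where "c = w \<bullet> s0 + \<beta> * p s0"
    have "c < 0" using \<open>\<not> 0 \<le> w \<bullet> s0 + \<beta> * p s0\<close> by (simp add: c_def)
    define t where "t = (1 - b) / - c"
    have "0 \<le> t" using b0 \<open>c < 0\<close> unfolding t_def by (intro divide_nonneg_pos) auto
    then have "b \<le> t * c" using above by (force simp: T_def a c_def algebra_simps)
    also have "\<dots> = b - 1" using \<open>c < 0\<close> by (simp add: t_def field_simps)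
    finally show False by simp
  qed
  with neg epi show ?thesis by blast
qed

lemma sublinear_exact_support:
  fixes p :: "'a::euclidean_space \<Rightarrow> real"
  assumes p: "sublinear_on UNIV p"
  shows "\<exists>v. (\<forall>s. v \<bullet> s \<le> p s) \<and> v \<bullet> s0 = p s0"
proof -
  obtain w \<beta> where "\<beta> < 0" and epi: "\<And>s r. p s < r \<Longrightarrow> w \<bullet> s + \<beta> * r \<le> 0"
    and ray: "0 \<le> w \<bullet> s0 + \<beta> * p s0"
    using sublinear_separating_functional[OF p, of s0] by blast
  define v where "v = (- 1 / \<beta>) *\<^sub>R w"
  have v_le: "v \<bullet> s \<le> p s" for s
  proof (rule field_le_epsilon)
    fix e :: real assume "0 < e"
    then have "w \<bullet> s \<le> - \<beta> * (p s + e)" using epi[of s "p s + e"] by simp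
    then show "v \<bullet> s \<le> p s + e" using \<open>\<beta> < 0\<close> by (simp add: v_def field_simps)
  qed
  moreover have "p s0 \<le> v \<bullet> s0" using ray \<open>\<beta> < 0\<close> by (simp add: v_def field_simps)
  ultimately show ?thesis by (intro exI[of _ v]) (auto intro: order.antisym)
qed

lemma exact_penalty_ratio_le:
  assumes C: "convex_cone C" and \<Phi>: "sublinear_on C \<Phi>" and G: "sublinear_on C G"
    and pen: "\<And>s. s \<in> C \<Longrightarrow> 0 \<le> \<Phi> s + c * max 0 (G s)"
    and s1: "s1 \<in> C" "0 < G s1" and s2: "s2 \<in> C" "G s2 < 0"
  shows "- \<Phi> s1 / G s1 \<le> \<Phi> s2 / - G s2"
proof -
  define a b where "a = - G s2" and "b = G s1"
  have ab: "0 < a" "0 < b" using s1 s2 by (simp_all add: a_def b_def)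
  have as1: "a *\<^sub>R s1 \<in> C" and bs2: "b *\<^sub>R s2 \<in> C"
    using C ab s1 s2 by (simp_all add: convex_cone_scaleR)
  have sC: "a *\<^sub>R s1 + b *\<^sub>R s2 \<in> C" using convex_cone_add[OF C as1 bs2] .
  have "G (a *\<^sub>R s1 + b *\<^sub>R s2) \<le> a * G s1 + b * G s2"
    using sublinear_onD[OF G] as1 bs2 ab s1 s2 by metis
  also have "\<dots> = 0" by (simp add: a_def b_def)
  finally have "0 \<le> \<Phi> (a *\<^sub>R s1 + b *\<^sub>R s2)" using pen[OF sC] by simp
  also have "\<dots> \<le> a * \<Phi> s1 + b * \<Phi> s2"
    using sublinear_onD[OF \<Phi>] as1 bs2 ab s1 s2 by metis
  finally show ?thesis
    using s1(2) s2(2) by (simp add: a_def b_def divide_le_eq le_divide_eq algebra_simps)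
qed

text \<open>A single constraint: the multiplier is the largest ratio -\<Phi> s / G s over the directions
  with G s > 0; the exact penalty bounds it by c, and exact_penalty_ratio_le bounds it by the
  ratios \<Phi> s / - G s over the directions with G s < 0.\<close>
lemma exact_penalty_multiplier:
  assumes C: "convex_cone C" and \<Phi>: "sublinear_on C \<Phi>" and G: "sublinear_on C G" and c: "0 \<le> c"
    and pen: "\<And>s. s \<in> C \<Longrightarrow> 0 \<le> \<Phi> s + c * max 0 (G s)"
  shows "\<exists>\<mu>. 0 \<le> \<mu> \<and> \<mu> \<le> c \<and> (\<forall>s\<in>C. 0 \<le> \<Phi> s + \<mu> * G s)"
proof -
  define R where "R = insert 0 {- \<Phi> s / G s | s. s \<in> C \<and> 0 < G s}"
  have R_le_c: "r \<le> c" if "r \<in> R" for r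
  proof -
    have "- \<Phi> s / G s \<le> c" if "s \<in> C" "0 < G s" for s
      using pen[OF that(1)] that(2) by (simp add: max_def field_simps)
    then show ?thesis using \<open>r \<in> R\<close> c by (auto simp: R_def)
  qed
  have bdd: "bdd_above R" using R_le_c by (auto simp: bdd_above_def)
  define \<mu> where "\<mu> = Sup R"
  have "0 \<le> \<mu>" unfolding \<mu>_def by (rule cSup_upper[OF _ bdd]) (simp add: R_def)
  moreover have "\<mu> \<le> c" unfolding \<mu>_def by (rule cSup_least) (auto simp: R_def R_le_c)
  moreover have "0 \<le> \<Phi> s + \<mu> * G s" if sC: "s \<in> C" for s
  proof (cases "0 < G s")
    case True
    have "- \<Phi> s / G s \<le> \<mu>"
      unfolding \<mu>_def using sC True by (intro cSup_upper[OF _ bdd]) (auto simp: R_def)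
    then show ?thesis using True by (simp add: field_simps)
  next
    case False
    show ?thesis
    proof (cases "G s = 0")
      case True
      then show ?thesis using pen[OF sC] by simp
    next
      case False
      with \<open>\<not> 0 < G s\<close> have neg: "G s < 0" by simp
      have "0 \<le> \<Phi> s" using pen[OF sC] neg by simp
      then have "0 \<le> \<Phi> s / - G s" using neg by (intro divide_nonneg_pos) auto
      then have "r \<le> \<Phi> s / - G s" if "r \<in> R" for r
        using that exact_penalty_ratio_le[OF C \<Phi> G pen _ _ sC neg] unfolding R_def by blast
      then have "\<mu> \<le> \<Phi> s / - G s"
        unfolding \<mu>_def by (intro cSup_least) (auto simp: R_def)
      then show ?thesis using neg by (simp add: field_simps)
    qed
  qed
  ultimately show ?thesis by blast
qed

lemma exact_penalty_multipliers:
  fixes G :: "'i \<Rightarrow> 'a::real_vector \<Rightarrow> real"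
  assumes "finite A" and C: "convex_cone C" and c: "0 \<le> c"
    and G: "\<And>i. i \<in> A \<Longrightarrow> sublinear_on C (G i)" and F: "sublinear_on C F"
    and pen: "\<And>s. s \<in> C \<Longrightarrow> 0 \<le> F s + c * (\<Sum>i\<in>A. max 0 (G i s))"
  shows "\<exists>lam. (\<forall>i\<in>A. 0 \<le> lam i \<and> lam i \<le> c) \<and> (\<forall>s\<in>C. 0 \<le> F s + (\<Sum>i\<in>A. lam i * G i s))"
  using assms(1) G F pen
proof (induction A arbitrary: F rule: finite_induct)
  case empty
  then show ?case by auto
next
  case (insert a A)
  define \<Phi> where "\<Phi> s = F s + c * (\<Sum>i\<in>A. max 0 (G i s))" for s
  have "sublinear_on C \<Phi>"
    unfolding \<Phi>_def using insert.prems insert.hyps c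
    by (intro sublinear_on_add sublinear_on_scale sublinear_on_sum sublinear_on_max0) auto
  moreover have "0 \<le> \<Phi> s + c * max 0 (G a s)" if "s \<in> C" for s
    using insert.prems(3)[OF that] insert.hyps by (simp add: \<Phi>_def algebra_simps)
  ultimately obtain \<mu> where \<mu>: "0 \<le> \<mu>" "\<mu> \<le> c" "\<forall>s\<in>C. 0 \<le> \<Phi> s + \<mu> * G a s"
    using exact_penalty_multiplier[OF C _ insert.prems(1) c] by blast
  have "sublinear_on C (\<lambda>s. F s + \<mu> * G a s)"
    using insert.prems \<mu>(1) by (intro sublinear_on_add sublinear_on_scale) auto
  moreover have "0 \<le> F s + \<mu> * G a s + c * (\<Sum>i\<in>A. max 0 (G i s))" if "s \<in> C" for s
    using \<mu>(3) that by (simp add: \<Phi>_def algebra_simps)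
  ultimately obtain lam where lam: "\<forall>i\<in>A. 0 \<le> lam i \<and> lam i \<le> c"
    "\<forall>s\<in>C. 0 \<le> F s + \<mu> * G a s + (\<Sum>i\<in>A. lam i * G i s)"
    using insert.IH[of "\<lambda>s. F s + \<mu> * G a s"] insert.prems(1) by blast
  have "(\<Sum>i\<in>insert a A. (lam(a := \<mu>)) i * G i s) = \<mu> * G a s + (\<Sum>i\<in>A. lam i * G i s)" for s
    using insert.hyps by (auto intro!: sum.cong)
  then show ?case
    using lam \<mu> by (intro exI[of _ "lam(a := \<mu>)"]) (auto simp: add.assoc)
qed

section \<open>Clarke subgradients\<close>

lemma clarke_dir_sublinear:
  "lipschitz_on_fibers Iz h L \<Longrightarrow> sublinear_on (cont_dirs Iz) (clarke_dir Iz h x)"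
  unfolding sublinear_on_def by (auto intro: clarke_dir_add_le clarke_dir_scaleR)

definition cont_proj :: "'n::finite set \<Rightarrow> real^'n \<Rightarrow> real^'n" where
  "cont_proj Iz s = (\<chi> i. if i \<in> Iz then 0 else s$i)"

lemma linear_cont_proj: "linear (cont_proj Iz)"
  by (rule linearI) (simp_all add: cont_proj_def vec_eq_iff)

lemma cont_proj_in_cont_dirs: "cont_proj Iz s \<in> cont_dirs Iz"
  by (simp add: cont_proj_def cont_dirs_def)

lemma cont_proj_id: "s \<in> cont_dirs Iz \<Longrightarrow> cont_proj Iz s = s"
  by (simp add: cont_proj_def cont_dirs_def vec_eq_iff)

lemma cont_proj_axis: "i \<in> Iz \<Longrightarrow> cont_proj Iz (axis i c) = 0"
  by (simp add: cont_proj_def vec_eq_iff axis_def)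

text \<open>Apply the support lemma to the Clarke derivative composed with the projection onto the
  continuous coordinates; the projection kills the integer components of the supporting vector.\<close>
lemma subdiff_c_attains_clarke_dir:
  assumes L: "lipschitz_on_fibers Iz h L" and s0: "s0 \<in> cont_dirs Iz"
  shows "\<exists>v\<in>subdiff_c Iz h x. v \<bullet> s0 = clarke_dir Iz h x s0"
proof -
  define p where "p = clarke_dir Iz h x \<circ> cont_proj Iz"
  have "sublinear_on UNIV p"
    unfolding p_def using cont_proj_in_cont_dirs
    by (intro sublinear_on_comp_linear[OF clarke_dir_sublinear[OF L] linear_cont_proj]) blast
  then obtain v where v_le: "\<And>s. v \<bullet> s \<le> p s" and v_s0: "v \<bullet> s0 = p s0"
    using sublinear_exact_support by blast
  have "v$i = 0" if "i \<in> Iz" for i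
    using v_le[of "axis i 1"] v_le[of "axis i (-1)"] that
    by (simp add: p_def cont_proj_axis inner_axis)
  moreover have "ereal (s \<bullet> v) \<le> clarke_c Iz h x s" if "s \<in> cont_dirs Iz" for s
    using v_le[of s] that
    by (simp add: p_def cont_proj_id clarke_c_eq_clarke_dir[OF L] inner_commute)
  ultimately have "v \<in> subdiff_c Iz h x"
    by (simp add: subdiff_c_def cont_dirs_def)
  with v_s0 s0 show ?thesis by (auto simp: p_def cont_proj_id)
qed

lemma Dc_subset_cont_dirs: "Dc Iz l u x \<subseteq> cont_dirs Iz"
  by (auto simp: Dc_def cont_dirs_def)

lemma convex_cone_Dc: "convex_cone (Dc Iz l u x)"
  unfolding convex_cone_iff Dc_def
  by (auto intro!: add_nonneg_nonneg add_nonpos_nonpos mult_nonneg_nonneg mult_nonneg_nonpos)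

section \<open>Difference quotients of the penalty function\<close>

definition viol :: "(nat \<Rightarrow> 'a \<Rightarrow> real) \<Rightarrow> nat \<Rightarrow> 'a \<Rightarrow> real" where
  "viol g m z = (\<Sum>i=1..m. max 0 (g i z))"

lemma viol_feasF: "z \<in> feasF g m \<Longrightarrow> viol g m z = 0"
  by (auto simp: viol_def feasF_def max_def intro!: sum.neutral)

lemma penalty_eq_viol: "penalty f g m e z = f z + viol g m z / e"
  by (simp add: penalty_def viol_def)

lemma diff_quot_penalty:
  "diff_quot (penalty f g m e) s yt = diff_quot f s yt + diff_quot (viol g m) s yt / e"
  by (simp add: penalty_eq_viol diff_quot_def case_prod_unfold add_divide_distrib
      diff_divide_distrib mult.commute)

lemma diff_quot_viol:
  "diff_quot (viol g m) s yt = (\<Sum>i=1..m. diff_quot (\<lambda>z. max 0 (g i z)) s yt)"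
  by (simp add: viol_def diff_quot_def case_prod_unfold sum_subtractf flip: sum_divide_distrib)

lemma diff_quot_max0_le:
  assumes "0 < t"
  shows "diff_quot (\<lambda>z. max 0 (h z)) s (y, t) \<le> max 0 (diff_quot h s (y, t))"
proof -
  have "max 0 (h (y + t *\<^sub>R s)) - max 0 (h y) \<le> max 0 (h (y + t *\<^sub>R s) - h y)" by linarith
  then have "(max 0 (h (y + t *\<^sub>R s)) - max 0 (h y)) / t \<le> max 0 (h (y + t *\<^sub>R s) - h y) / t"
    using assms by (simp add: divide_right_mono)
  also have "\<dots> = max 0 (diff_quot h s (y, t))"
    using assms by (auto simp: diff_quot_def max_def field_simps)
  finally show ?thesis by (simp add: diff_quot_def)
qed

lemma diff_quot_max0_neg:
  "h y < 0 \<Longrightarrow> h (y + t *\<^sub>R s) < 0 \<Longrightarrow> diff_quot (\<lambda>z. max 0 (h z)) s (y, t) = 0"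
  by (simp add: diff_quot_def)

lemma diff_quot_max0_pos:
  "0 < h y \<Longrightarrow> 0 < h (y + t *\<^sub>R s) \<Longrightarrow> diff_quot (\<lambda>z. max 0 (h z)) s (y, t) = diff_quot h s (y, t)"
  by (simp add: diff_quot_def)

lemma eventually_clarke_filter_sign:
  assumes L: "lipschitz_on_fibers Iz h L" and s: "s \<in> cont_dirs Iz"
  shows "h x < 0 \<Longrightarrow> eventually (\<lambda>(y, t). h y < 0 \<and> h (y + t *\<^sub>R s) < 0) (clarke_filter Iz x)"
    and "0 < h x \<Longrightarrow> eventually (\<lambda>(y, t). 0 < h y \<and> 0 < h (y + t *\<^sub>R s)) (clarke_filter Iz x)"
proof -
  have start: "((\<lambda>yt. h (fst yt)) \<longlongrightarrow> h x) (clarke_filter Iz x)"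
    using filterlim_compose[OF lipschitz_on_fibers_tendsto[OF L] filterlim_fst_clarke_filter] .
  have "((\<lambda>yt. h ((\<lambda>(y, t). y + t *\<^sub>R s) yt)) \<longlongrightarrow> h x) (clarke_filter Iz x)"
    using filterlim_compose[OF lipschitz_on_fibers_tendsto[OF L] filterlim_clarke_filter_endpoint[OF s]] .
  then have endpoint: "((\<lambda>yt. h (fst yt + snd yt *\<^sub>R s)) \<longlongrightarrow> h x) (clarke_filter Iz x)"
    by (simp add: case_prod_unfold)
  show "h x < 0 \<Longrightarrow> eventually (\<lambda>(y, t). h y < 0 \<and> h (y + t *\<^sub>R s) < 0) (clarke_filter Iz x)"
    using order_tendstoD(2)[OF start] order_tendstoD(2)[OF endpoint]
    by (simp add: case_prod_unfold eventually_conj_iff)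
  show "0 < h x \<Longrightarrow> eventually (\<lambda>(y, t). 0 < h y \<and> 0 < h (y + t *\<^sub>R s)) (clarke_filter Iz x)"
    using order_tendstoD(1)[OF start] order_tendstoD(1)[OF endpoint]
    by (simp add: case_prod_unfold eventually_conj_iff)
qed

lemma eventually_sum_le:
  fixes f :: "'i \<Rightarrow> 'a \<Rightarrow> 'b::ordered_comm_monoid_add"
  assumes "finite I" and "\<And>i. i \<in> I \<Longrightarrow> eventually (\<lambda>z. f i z \<le> b i) F"
  shows "eventually (\<lambda>z. (\<Sum>i\<in>I. f i z) \<le> (\<Sum>i\<in>I. b i)) F"
proof -
  have "eventually (\<lambda>z. \<forall>i\<in>I. f i z \<le> b i) F"
    using assms by (intro eventually_ball_finite) auto
  then show ?thesis by (auto intro: sum_mono elim!: eventually_mono)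
qed

lemma clarke_jahn_le:
  assumes "eventually (\<lambda>yt. diff_quot P s yt \<le> a) (clarke_filter Iz x)"
  shows "clarke_jahn Iz l u P x s \<le> ereal a"
  unfolding clarke_jahn_def
  by (rule Limsup_bounded)
     (use assms in \<open>auto simp: clarke_filter_def fiber_nhds_def diff_quot_def case_prod_unfold
        eventually_inf_principal elim: eventually_mono\<close>)

lemma clarke_jahn_penalty_le:
  assumes "0 < e"
    and "eventually (\<lambda>yt. diff_quot f s yt \<le> a) (clarke_filter Iz x)"
    and "eventually (\<lambda>yt. diff_quot (viol g m) s yt \<le> b) (clarke_filter Iz x)"
  shows "clarke_jahn Iz l u (penalty f g m e) x s \<le> ereal (a + b / e)"
proof (rule clarke_jahn_le)
  show "eventually (\<lambda>yt. diff_quot (penalty f g m e) s yt \<le> a + b / e) (clarke_filter Iz x)"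
    using assms(2,3)
    by eventually_elim (use assms(1) in \<open>simp add: diff_quot_penalty add_mono divide_right_mono\<close>)
qed

section \<open>Feasible stationary points are KKT points\<close>

lemma eventually_diff_quot_max0_le:
  assumes L: "lipschitz_on_fibers Iz h L" and s: "s \<in> cont_dirs Iz" and "h x \<le> 0" and "0 < \<eta>"
  shows "eventually (\<lambda>yt. diff_quot (\<lambda>z. max 0 (h z)) s yt
           \<le> (if h x = 0 then max 0 (clarke_dir Iz h x s) + \<eta> else 0)) (clarke_filter Iz x)"
proof (cases "h x = 0")
  case True
  have "eventually (\<lambda>yt. diff_quot h s yt < clarke_dir Iz h x s + \<eta>) (clarke_filter Iz x)"
    using \<open>0 < \<eta>\<close> by (intro eventually_diff_quot_less[OF L s]) simp
  with eventually_snd_pos_clarke_filter show ?thesis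
  proof eventually_elim
    case (elim yt)
    obtain y t where yt: "yt = (y, t)" by fastforce
    have "diff_quot (\<lambda>z. max 0 (h z)) s yt \<le> max 0 (diff_quot h s yt)"
      using elim by (simp add: yt diff_quot_max0_le)
    also have "\<dots> \<le> max 0 (clarke_dir Iz h x s) + \<eta>" using elim \<open>0 < \<eta>\<close> by simp
    finally show ?case using True by simp
  qed
next
  case False
  with \<open>h x \<le> 0\<close> have "h x < 0" by simp
  from eventually_clarke_filter_sign(1)[OF L s this] show ?thesis
    by (rule eventually_mono) (auto simp: False diff_quot_max0_neg split: prod.splits)
qed

lemma clarke_dir_penalty_nonneg:
  assumes Lf: "lipschitz_on_fibers Iz f L" and Lg: "\<forall>i\<in>{1..m}. lipschitz_on_fibers Iz (g i) L"
    and e: "0 < e" and x: "x \<in> feasF g m" and s: "s \<in> cont_dirs Iz"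
    and cj: "0 \<le> clarke_jahn Iz l u (penalty f g m e) x s"
  shows "0 \<le> clarke_dir Iz f x s + (\<Sum>i\<in>{i\<in>{1..m}. g i x = 0}. max 0 (clarke_dir Iz (g i) x s)) / e"
proof -
  define A where "A = {i\<in>{1..m}. g i x = 0}"
  define V where "V = clarke_dir Iz f x s + (\<Sum>i\<in>A. max 0 (clarke_dir Iz (g i) x s)) / e"
  define K where "K = 1 + card A / e"
  have bound: "0 \<le> V + \<eta> * K" if "0 < \<eta>" for \<eta>
  proof -
    define b where "b i = (if g i x = 0 then max 0 (clarke_dir Iz (g i) x s) + \<eta> else 0)" for i
    have "eventually (\<lambda>yt. diff_quot f s yt \<le> clarke_dir Iz f x s + \<eta>) (clarke_filter Iz x)"
      using eventually_diff_quot_less[OF Lf s, of x "clarke_dir Iz f x s + \<eta>"] \<open>0 < \<eta>\<close>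
      by (auto elim: eventually_mono)
    moreover have "eventually (\<lambda>yt. diff_quot (viol g m) s yt \<le> (\<Sum>i=1..m. b i)) (clarke_filter Iz x)"
      unfolding diff_quot_viol b_def using Lg x \<open>0 < \<eta>\<close>
      by (intro eventually_sum_le eventually_diff_quot_max0_le[OF _ s]) (auto simp: feasF_def)
    ultimately have "clarke_jahn Iz l u (penalty f g m e) x s
        \<le> ereal (clarke_dir Iz f x s + \<eta> + (\<Sum>i=1..m. b i) / e)"
      by (rule clarke_jahn_penalty_le[OF e])
    with cj have "0 \<le> clarke_dir Iz f x s + \<eta> + (\<Sum>i=1..m. b i) / e"
      by (metis ereal_less_eq(3) order_trans zero_ereal_def)
    moreover have "(\<Sum>i=1..m. b i) = (\<Sum>i\<in>A. max 0 (clarke_dir Iz (g i) x s)) + card A * \<eta>"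
      by (simp add: b_def A_def sum.If_cases sum.distrib Int_def conj_commute)
    then have "V + \<eta> * K = clarke_dir Iz f x s + \<eta> + (\<Sum>i=1..m. b i) / e"
      using e by (simp add: V_def K_def field_simps)
    ultimately show ?thesis by simp
  qed
  have "0 < K" using e by (simp add: K_def add_pos_nonneg)
  have "0 \<le> V + \<epsilon>" if "0 < \<epsilon>" for \<epsilon>
    using bound[of "\<epsilon> / K"] \<open>0 < K\<close> that by simp
  then have "0 \<le> V" by (rule field_le_epsilon)
  then show ?thesis by (simp add: V_def A_def)
qed

lemma stationary_pen_feasible_multipliers:
  assumes Lf: "lipschitz_on_fibers Iz f L" and Lg: "\<forall>i\<in>{1..m}. lipschitz_on_fibers Iz (g i) L"
    and e: "0 < e" and st: "stationary_pen Iz l u f g m e x" and x: "x \<in> feasF g m"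
  shows "\<exists>lam. (\<forall>i\<in>{1..m}. 0 \<le> lam i) \<and> (\<Sum>i=1..m. lam i * g i x) = 0 \<and>
           (\<forall>s\<in>Dc Iz l u x. 0 \<le> clarke_dir Iz f x s + (\<Sum>i=1..m. lam i * clarke_dir Iz (g i) x s))"
proof -
  define A where "A = {i\<in>{1..m}. g i x = 0}"
  have sublin_Dc: "sublinear_on (Dc Iz l u x) (clarke_dir Iz h x)"
    if "lipschitz_on_fibers Iz h L" for h
    using clarke_dir_sublinear[OF that] Dc_subset_cont_dirs by (rule sublinear_on_subset)
  have pen: "0 \<le> clarke_dir Iz f x s + (1 / e) * (\<Sum>i\<in>A. max 0 (clarke_dir Iz (g i) x s))"
    if "s \<in> Dc Iz l u x" for s
  proof -
    have "s \<in> cont_dirs Iz" using that Dc_subset_cont_dirs by blast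
    moreover have "0 \<le> clarke_jahn Iz l u (penalty f g m e) x s"
      using st that by (simp add: stationary_pen_def)
    ultimately show ?thesis
      using clarke_dir_penalty_nonneg[OF Lf Lg e x] by (simp add: A_def)
  qed
  have "finite A" by (simp add: A_def)
  moreover have "sublinear_on (Dc Iz l u x) (clarke_dir Iz (g i) x)" if "i \<in> A" for i
    using that Lg by (intro sublin_Dc) (simp add: A_def)
  ultimately obtain lam where lam: "\<forall>i\<in>A. 0 \<le> lam i"
    and lam_Dc: "\<forall>s\<in>Dc Iz l u x. 0 \<le> clarke_dir Iz f x s + (\<Sum>i\<in>A. lam i * clarke_dir Iz (g i) x s)"
    using exact_penalty_multipliers[OF _ convex_cone_Dc _ _ sublin_Dc[OF Lf] pen] e by auto
  define lam' where "lam' i = (if i \<in> A then lam i else 0)" for i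
  have sum_lam': "(\<Sum>i=1..m. lam' i * c i) = (\<Sum>i\<in>A. lam i * c i)" for c :: "nat \<Rightarrow> real"
  proof -
    have "(\<Sum>i=1..m. lam' i * c i) = (\<Sum>i=1..m. if i \<in> A then lam i * c i else 0)"
      by (rule sum.cong) (simp_all add: lam'_def)
    then show ?thesis by (simp add: A_def sum.If_cases Int_def conj_commute)
  qed
  show ?thesis
    using lam lam_Dc sum_lam'[of "\<lambda>i. g i x"] sum_lam'[of "\<lambda>i. clarke_dir Iz (g i) x _"]
    by (intro exI[of _ lam']) (auto simp: lam'_def A_def)
qed

lemma subdiff_c_condition_of_clarke_dir:
  assumes Lf: "lipschitz_on_fibers Iz f L" and Lg: "\<forall>i\<in>{1..m}. lipschitz_on_fibers Iz (g i) L"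
    and s: "s \<in> cont_dirs Iz"
    and nonneg: "0 \<le> clarke_dir Iz f x s + (\<Sum>i=1..m. lam i * clarke_dir Iz (g i) x s)"
  shows "\<exists>\<xi>0\<in>subdiff_c Iz f x. \<exists>\<xi>. (\<forall>i\<in>{1..m}. \<xi> i \<in> subdiff_c Iz (g i) x) \<and>
           0 \<le> (\<xi>0 + (\<Sum>i=1..m. lam i *\<^sub>R \<xi> i)) \<bullet> s"
proof -
  obtain \<xi>0 where \<xi>0: "\<xi>0 \<in> subdiff_c Iz f x" "\<xi>0 \<bullet> s = clarke_dir Iz f x s"
    using subdiff_c_attains_clarke_dir[OF Lf s] by blast
  have "\<forall>i\<in>{1..m}. \<exists>v. v \<in> subdiff_c Iz (g i) x \<and> v \<bullet> s = clarke_dir Iz (g i) x s"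
    using subdiff_c_attains_clarke_dir[OF _ s] Lg by blast
  then obtain \<xi> where \<xi>: "\<forall>i\<in>{1..m}. \<xi> i \<in> subdiff_c Iz (g i) x \<and> \<xi> i \<bullet> s = clarke_dir Iz (g i) x s"
    by metis
  have "(\<xi>0 + (\<Sum>i=1..m. lam i *\<^sub>R \<xi> i)) \<bullet> s
      = clarke_dir Iz f x s + (\<Sum>i=1..m. lam i * clarke_dir Iz (g i) x s)"
    using \<xi>0 \<xi> by (simp add: inner_add_left inner_sum_left)
  then show ?thesis
    using \<xi>0(1) \<xi> nonneg by (intro bexI[of _ \<xi>0] exI[of _ \<xi>]) auto
qed

lemma stationary_pen_feasible_imp_kkt:
  assumes Lf: "lipschitz_on_fibers Iz f L" and Lg: "\<forall>i\<in>{1..m}. lipschitz_on_fibers Iz (g i) L"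
    and e: "0 < e" and st: "stationary_pen Iz l u f g m e x" and x: "x \<in> feasF g m"
  shows "kkt_point Iz l u f g m x"
proof -
  obtain lam where lam: "\<forall>i\<in>{1..m}. 0 \<le> lam i" "(\<Sum>i=1..m. lam i * g i x) = 0"
    and dir: "\<forall>s\<in>Dc Iz l u x. 0 \<le> clarke_dir Iz f x s + (\<Sum>i=1..m. lam i * clarke_dir Iz (g i) x s)"
    using stationary_pen_feasible_multipliers[OF Lf Lg e st x] by blast
  have "\<forall>s\<in>Dc Iz l u x. \<exists>\<xi>0\<in>subdiff_c Iz f x. \<exists>\<xi>. (\<forall>i\<in>{1..m}. \<xi> i \<in> subdiff_c Iz (g i) x) \<and>
           0 \<le> (\<xi>0 + (\<Sum>i=1..m. lam i *\<^sub>R \<xi> i)) \<bullet> s"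
    using dir Dc_subset_cont_dirs by (blast intro: subdiff_c_condition_of_clarke_dir[OF Lf Lg])
  moreover have "\<forall>y\<in>Bz Iz l u x \<inter> feasF g m. f x \<le> f y"
    using st x by (auto simp: stationary_pen_def penalty_eq_viol viol_feasF)
  ultimately show ?thesis
    using st x lam unfolding kkt_point_def stationary_pen_def by blast
qed

section \<open>Stationary points are feasible for small penalty parameters\<close>

lemma finite_negative_margin:
  fixes a :: "'i \<Rightarrow> real"
  assumes "finite A" and "\<And>i. i \<in> A \<Longrightarrow> a i < 0"
  obtains \<eta> where "0 < \<eta>" and "\<And>i. i \<in> A \<Longrightarrow> a i < - \<eta>"
proof
  define \<eta> where "\<eta> = Min (insert 1 ((\<lambda>i. - a i / 2) ` A))"
  show "0 < \<eta>" using assms by (simp add: \<eta>_def)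
  show "a i < - \<eta>" if "i \<in> A" for i
  proof -
    have "\<eta> \<le> - a i / 2" using assms(1) that by (simp add: \<eta>_def)
    then show ?thesis using assms(2)[OF that] by linarith
  qed
qed

lemma eventually_nhds_coord_eq_imp: "eventually (\<lambda>y::real^'n. y$i = c \<longrightarrow> x$i = c) (nhds x)"
proof (cases "x$i = c")
  case False
  have "((\<lambda>y::real^'n. y$i) \<longlongrightarrow> x$i) (nhds x)" by (rule tendsto_vec_nth[OF filterlim_ident])
  from tendsto_imp_eventually_ne[OF this False] show ?thesis by (rule eventually_mono) simp
qed simp

lemma eventually_Dc_nhds:
  assumes "s \<in> Dc Iz l u x"
  shows "eventually (\<lambda>y. s \<in> Dc Iz l u y) (nhds x)"
proof -
  have "eventually (\<lambda>y. \<forall>i. (y$i = l$i \<longrightarrow> x$i = l$i) \<and> (y$i = u$i \<longrightarrow> x$i = u$i)) (nhds x)"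
    by (intro eventually_all_finite eventually_conj eventually_nhds_coord_eq_imp)
  then show ?thesis using assms by (auto simp: Dc_def elim!: eventually_mono)
qed

lemma Dz_of_same_int_part:
  assumes d: "d \<in> Dz Iz l u x" and y: "same_int_part Iz y x" "y \<in> boxX l u"
  shows "d \<in> Dz Iz l u y"
proof -
  have "(y + d)$i = (if i \<in> Iz then (x + d)$i else y$i)" for i
    using d y by (auto simp: Dz_def same_int_part_def)
  then show ?thesis using d y by (auto simp: Dz_def boxX_def intset_def)
qed

lemma viol_tendsto:
  assumes "\<forall>i\<in>{1..m}. lipschitz_on_fibers Iz (g i) L"
  shows "(viol g m \<longlongrightarrow> viol g m x) (fiber_nhds Iz x)"
  unfolding viol_def[abs_def] using assms
  by (intro tendsto_sum tendsto_max tendsto_const lipschitz_on_fibers_tendsto) auto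

definition uniform_descent ::
    "(nat \<Rightarrow> 'a::real_vector \<Rightarrow> real) \<Rightarrow> nat \<Rightarrow> nat set \<Rightarrow> 'a \<Rightarrow> real \<Rightarrow> 'a \<times> real \<Rightarrow> bool" where
  "uniform_descent g m A s \<eta> = (\<lambda>(z, t). (\<forall>i\<in>A. diff_quot (g i) s (z, t) < - \<eta>) \<and>
     (\<forall>i\<in>{1..m} - A. g i z < 0 \<and> g i (z + t *\<^sub>R s) < 0))"

lemma diff_quot_viol_le_of_uniform_descent:
  assumes "uniform_descent g m A s \<eta> (z, t)" and "0 < t" and "0 < \<eta>"
    and i0: "i0 \<in> {1..m}" "0 < g i0 z" "0 < g i0 (z + t *\<^sub>R s)"
  shows "diff_quot (viol g m) s (z, t) \<le> - \<eta>"
proof -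
  have desc: "\<forall>i\<in>A. diff_quot (g i) s (z, t) < - \<eta>"
    and neg: "\<forall>i\<in>{1..m} - A. g i z < 0 \<and> g i (z + t *\<^sub>R s) < 0"
    using assms(1) by (simp_all add: uniform_descent_def)
  have "i0 \<in> A" using neg i0 by force
  have "diff_quot (\<lambda>z. max 0 (g i z)) s (z, t) \<le> (if i = i0 then - \<eta> else 0)" if "i \<in> {1..m}" for i
  proof (cases "i \<in> A")
    case True
    have "diff_quot (g i) s (z, t) < - \<eta>" using desc True by blast
    moreover have "diff_quot (\<lambda>z. max 0 (g i z)) s (z, t) \<le> max 0 (diff_quot (g i) s (z, t))"
      using \<open>0 < t\<close> by (rule diff_quot_max0_le)
    ultimately show ?thesis using i0 \<open>0 < \<eta>\<close> by (auto simp: diff_quot_max0_pos)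
  next
    case False
    then show ?thesis using neg that \<open>i0 \<in> A\<close> by (auto simp: diff_quot_max0_neg)
  qed
  then have "diff_quot (viol g m) s (z, t) \<le> (\<Sum>i=1..m. if i = i0 then - \<eta> else 0)"
    unfolding diff_quot_viol by (intro sum_mono) blast
  also have "\<dots> = - \<eta>" using i0 by simp
  finally show ?thesis .
qed

lemma eventually_diff_quot_viol_le_at_infeasible:
  assumes Lg: "\<forall>i\<in>{1..m}. lipschitz_on_fibers Iz (g i) L" and s: "s \<in> cont_dirs Iz" and "0 < \<eta>"
    and E: "eventually (uniform_descent g m A s \<eta>) (clarke_filter Iz y)"
    and i0: "i0 \<in> {1..m}" "0 < g i0 y"
  shows "eventually (\<lambda>yt. diff_quot (viol g m) s yt \<le> - \<eta>) (clarke_filter Iz y)"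
proof -
  have "eventually (\<lambda>(z, t). 0 < g i0 z \<and> 0 < g i0 (z + t *\<^sub>R s)) (clarke_filter Iz y)"
    using Lg i0 by (intro eventually_clarke_filter_sign(2)[OF _ s]) auto
  with E eventually_snd_pos_clarke_filter show ?thesis
  proof eventually_elim
    case (elim yt)
    obtain z t where yt: "yt = (z, t)" by fastforce
    from elim show ?case
      unfolding yt using \<open>0 < \<eta>\<close> i0(1) by (intro diff_quot_viol_le_of_uniform_descent) auto
  qed
qed

lemma eventually_uniform_descent:
  assumes Lg: "\<forall>i\<in>{1..m}. lipschitz_on_fibers Iz (g i) L" and s: "s \<in> cont_dirs Iz"
    and desc: "\<forall>i\<in>{1..m}. 0 \<le> g i x \<longrightarrow> (\<forall>\<xi>\<in>subdiff_c Iz (g i) x. \<xi> \<bullet> s < 0)"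
  obtains A \<eta> where "0 < \<eta>" and "eventually (uniform_descent g m A s \<eta>) (clarke_filter Iz x)"
proof -
  define A where "A = {i\<in>{1..m}. 0 \<le> g i x}"
  have "finite A" by (simp add: A_def)
  have neg: "clarke_dir Iz (g i) x s < 0" if "i \<in> A" for i
  proof -
    have "lipschitz_on_fibers Iz (g i) L" using Lg that by (simp add: A_def)
    then obtain v where v: "v \<in> subdiff_c Iz (g i) x" "v \<bullet> s = clarke_dir Iz (g i) x s"
      using subdiff_c_attains_clarke_dir[OF _ s] by blast
    have "i \<in> {1..m}" "0 \<le> g i x" using that by (auto simp: A_def)
    with desc v(1) have "v \<bullet> s < 0" by blast
    with v(2) show ?thesis by simp
  qed
  obtain \<eta> where "0 < \<eta>" and \<eta>: "\<And>i. i \<in> A \<Longrightarrow> clarke_dir Iz (g i) x s < - \<eta>"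
    using finite_negative_margin[of A "\<lambda>i. clarke_dir Iz (g i) x s"] \<open>finite A\<close> neg by blast
  have "eventually (\<lambda>yt. \<forall>i\<in>A. diff_quot (g i) s yt < - \<eta>) (clarke_filter Iz x)"
    using Lg \<eta> by (intro eventually_ball_finite ballI eventually_diff_quot_less[OF _ s])
      (auto simp: A_def)
  moreover have "eventually (\<lambda>(z, t). \<forall>i\<in>{1..m} - A. g i z < 0 \<and> g i (z + t *\<^sub>R s) < 0)
      (clarke_filter Iz x)"
    unfolding case_prod_unfold using Lg
    by (intro eventually_ball_finite ballI eventually_clarke_filter_sign(1)[OF _ s,
        unfolded case_prod_unfold]) (auto simp: A_def)
  ultimately have "eventually (uniform_descent g m A s \<eta>) (clarke_filter Iz x)"
    unfolding uniform_descent_def by eventually_elim (auto simp: case_prod_unfold)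
  with \<open>0 < \<eta>\<close> show thesis by (rule that)
qed

text \<open>Along a direction in which every violated constraint decreases at rate \<eta>, the penalty
  term decreases at rate \<eta> / e, which beats the Lipschitz bound on f once e is small.\<close>
lemma stationary_pen_feasible_of_descent:
  assumes Lf: "lipschitz_on_fibers Iz f L" and Lg: "\<forall>i\<in>{1..m}. lipschitz_on_fibers Iz (g i) L"
    and s: "s \<in> Dc Iz l u y" and "0 < \<eta>" and e: "0 < e" "e * (\<bar>L\<bar> * norm s + 1) \<le> \<eta>"
    and E: "eventually (uniform_descent g m A s \<eta>) (clarke_filter Iz y)"
    and st: "stationary_pen Iz l u f g m e y"
  shows "y \<in> feasF g m"
proof (rule ccontr)
  assume "y \<notin> feasF g m"
  then obtain i0 where i0: "i0 \<in> {1..m}" "0 < g i0 y" by (auto simp: feasF_def not_le)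
  have sc: "s \<in> cont_dirs Iz" using s Dc_subset_cont_dirs by blast
  have "clarke_jahn Iz l u (penalty f g m e) y s \<le> ereal (L * norm s + - \<eta> / e)"
    using eventually_diff_quot_le_lipschitz(1)[OF Lf sc]
      eventually_diff_quot_viol_le_at_infeasible[OF Lg sc \<open>0 < \<eta>\<close> E i0]
    by (rule clarke_jahn_penalty_le[OF e(1)])
  moreover have "0 \<le> clarke_jahn Iz l u (penalty f g m e) y s"
    using st s by (simp add: stationary_pen_def)
  ultimately have "0 \<le> L * norm s - \<eta> / e"
    by (metis ereal_less_eq(3) order_trans zero_ereal_def minus_divide_left diff_conv_add_uminus)
  moreover have "L * norm s < \<eta> / e"
  proof -
    have "L * norm s < \<bar>L\<bar> * norm s + 1"
      by (smt (verit) abs_ge_self mult_right_mono norm_ge_zero)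
    also have "\<dots> \<le> \<eta> / e" using e by (simp add: le_divide_eq mult.commute)
    finally show ?thesis .
  qed
  ultimately show False by simp
qed

lemma stationary_pen_feasible_near_of_descent_dir:
  assumes Lf: "lipschitz_on_fibers Iz f L" and Lg: "\<forall>i\<in>{1..m}. lipschitz_on_fibers Iz (g i) L"
    and s: "s \<in> Dc Iz l u x"
    and desc: "\<forall>i\<in>{1..m}. 0 \<le> g i x \<longrightarrow> (\<forall>\<xi>\<in>subdiff_c Iz (g i) x. \<xi> \<bullet> s < 0)"
  shows "\<exists>e0>0. \<forall>\<^sub>F y in fiber_nhds Iz x.
           \<forall>e. 0 < e \<and> e \<le> e0 \<longrightarrow> stationary_pen Iz l u f g m e y \<longrightarrow> y \<in> feasF g m"
proof -
  have sc: "s \<in> cont_dirs Iz" using s Dc_subset_cont_dirs by blast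
  obtain A \<eta> where "0 < \<eta>" and E: "eventually (uniform_descent g m A s \<eta>) (clarke_filter Iz x)"
    using eventually_uniform_descent[OF Lg sc desc] by blast
  define e0 where "e0 = \<eta> / (\<bar>L\<bar> * norm s + 1)"
  have "0 < \<bar>L\<bar> * norm s + 1" by (simp add: add_nonneg_pos)
  have "\<forall>\<^sub>F y in fiber_nhds Iz x. eventually (uniform_descent g m A s \<eta>) (clarke_filter Iz y)"
    using E by (rule eventually_clarke_filter_nearby)
  moreover have "\<forall>\<^sub>F y in fiber_nhds Iz x. s \<in> Dc Iz l u y"
    using eventually_Dc_nhds[OF s] by (rule filter_leD[OF fiber_nhds_le_nhds])
  ultimately have "\<forall>\<^sub>F y in fiber_nhds Iz x.
      \<forall>e. 0 < e \<and> e \<le> e0 \<longrightarrow> stationary_pen Iz l u f g m e y \<longrightarrow> y \<in> feasF g m"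
  proof eventually_elim
    case (elim y)
    show ?case
    proof (intro allI impI)
      fix e assume e: "0 < e \<and> e \<le> e0" and st: "stationary_pen Iz l u f g m e y"
      have "e * (\<bar>L\<bar> * norm s + 1) \<le> \<eta>"
        using e \<open>0 < \<bar>L\<bar> * norm s + 1\<close> by (simp add: e0_def le_divide_eq)
      with e elim st show "y \<in> feasF g m"
        by (intro stationary_pen_feasible_of_descent[OF Lf Lg _ \<open>0 < \<eta>\<close>]) auto
    qed
  qed
  moreover have "0 < e0" using \<open>0 < \<eta>\<close> \<open>0 < \<bar>L\<bar> * norm s + 1\<close> by (simp add: e0_def)
  ultimately show ?thesis by blast
qed

lemma penalty_less_of_viol_decrease:
  assumes f: "f z - f y < B" and viol: "viol g m z - viol g m y < - \<Delta> / 2"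
    and "0 < B" "0 < e" "e \<le> \<Delta> / (2 * B)"
  shows "penalty f g m e z < penalty f g m e y"
proof -
  have "(viol g m z - viol g m y) / e < (- \<Delta> / 2) / e"
    using viol \<open>0 < e\<close> by (rule divide_strict_right_mono)
  also have "\<dots> = - (\<Delta> / (2 * e))" by simp
  also have "\<dots> \<le> - B" using assms(3-5) by (simp add: field_simps)
  finally have "(viol g m z - viol g m y) / e < - B" .
  moreover have "penalty f g m e z - penalty f g m e y = (f z - f y) + (viol g m z - viol g m y) / e"
    by (simp add: penalty_eq_viol diff_divide_distrib)
  ultimately show ?thesis using f by linarith
qed

text \<open>An integer step that strictly decreases the violation decreases the penalty function
  once 1 / e outweighs the change of f, contradicting minimality over the discrete neighbourhood.\<close>
lemma no_stationary_pen_near_of_descent_step: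
  assumes Lf: "lipschitz_on_fibers Iz f L" and Lg: "\<forall>i\<in>{1..m}. lipschitz_on_fibers Iz (g i) L"
    and d: "d \<in> Dz Iz l u x" and dec: "viol g m (x + d) < viol g m x"
  shows "\<exists>e0>0. \<forall>\<^sub>F y in fiber_nhds Iz x. \<forall>e. 0 < e \<and> e \<le> e0 \<longrightarrow> \<not> stationary_pen Iz l u f g m e y"
proof -
  define \<Delta> where "\<Delta> = viol g m x - viol g m (x + d)"
  define B where "B = \<bar>f (x + d) - f x\<bar> + 1"
  have "0 < \<Delta>" "0 < B" using dec by (simp_all add: \<Delta>_def B_def add_nonneg_pos)
  have shift: "((\<lambda>y. h (y + d)) \<longlongrightarrow> h (x + d)) (fiber_nhds Iz x)"
    if "(h \<longlongrightarrow> h (x + d)) (fiber_nhds Iz (x + d))" for h :: "_ \<Rightarrow> real"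
    using filterlim_compose[OF that filterlim_translate_fiber_nhds] .
  have "((\<lambda>y. f (y + d) - f y) \<longlongrightarrow> f (x + d) - f x) (fiber_nhds Iz x)"
    by (intro tendsto_diff shift lipschitz_on_fibers_tendsto[OF Lf])
  then have "\<forall>\<^sub>F y in fiber_nhds Iz x. f (y + d) - f y < B"
    by (rule order_tendstoD) (simp add: B_def)
  moreover have "((\<lambda>y. viol g m (y + d) - viol g m y) \<longlongrightarrow> - \<Delta>) (fiber_nhds Iz x)"
    using tendsto_diff[OF shift[OF viol_tendsto[OF Lg]] viol_tendsto[OF Lg]] by (simp add: \<Delta>_def)
  then have "\<forall>\<^sub>F y in fiber_nhds Iz x. viol g m (y + d) - viol g m y < - \<Delta> / 2"
    by (rule order_tendstoD) (simp add: \<open>0 < \<Delta>\<close>)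
  moreover note eventually_same_int_part_fiber_nhds
  ultimately have "\<forall>\<^sub>F y in fiber_nhds Iz x.
      \<forall>e. 0 < e \<and> e \<le> \<Delta> / (2 * B) \<longrightarrow> \<not> stationary_pen Iz l u f g m e y"
  proof eventually_elim
    case (elim y)
    show ?case
    proof (intro allI impI notI)
      fix e assume e: "0 < e \<and> e \<le> \<Delta> / (2 * B)" and st: "stationary_pen Iz l u f g m e y"
      have "d \<in> Dz Iz l u y" using Dz_of_same_int_part[OF d] elim st by (simp add: stationary_pen_def)
      then have "penalty f g m e y \<le> penalty f g m e (y + d)"
        using st by (auto simp: stationary_pen_def Bz_def)
      moreover have "penalty f g m e (y + d) < penalty f g m e y"
        using elim e \<open>0 < B\<close> by (intro penalty_less_of_viol_decrease) auto
      ultimately show False by simp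
    qed
  qed
  moreover have "0 < \<Delta> / (2 * B)" using \<open>0 < \<Delta>\<close> \<open>0 < B\<close> by simp
  ultimately show ?thesis by blast
qed

lemma compact_box_intset: "compact (boxX l u \<inter> intset (Iz :: 'n::finite set))"
proof -
  have "boxX l u \<inter> intset Iz = cbox l u \<inter> (\<Inter>i\<in>Iz. (\<lambda>x. x $ i) -` \<int>)"
    by (auto simp: boxX_def intset_def interval_cart)
  moreover have "closed (\<Inter>i\<in>Iz. (\<lambda>x::real^'n. x $ i) -` \<int>)"
    by (intro closed_INT ballI closed_vimage_vec_nth closed_Ints)
  ultimately show ?thesis by (simp add: compact_Int_closed)
qed

lemma compact_uniform_threshold:
  fixes K :: "'a::topological_space set" and P :: "real \<Rightarrow> 'a \<Rightarrow> bool"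
  assumes "compact K"
    and local: "\<And>x. x \<in> K \<Longrightarrow> \<exists>e>0. \<forall>\<^sub>F y in nhds x. y \<in> K \<longrightarrow> (\<forall>\<epsilon>. 0 < \<epsilon> \<and> \<epsilon> \<le> e \<longrightarrow> P \<epsilon> y)"
  shows "\<exists>e>0. \<forall>y\<in>K. \<forall>\<epsilon>. 0 < \<epsilon> \<and> \<epsilon> \<le> e \<longrightarrow> P \<epsilon> y"
proof -
  define Q where "Q x e U \<longleftrightarrow> 0 < e \<and> open U \<and> x \<in> U \<and>
    (\<forall>y\<in>U. y \<in> K \<longrightarrow> (\<forall>\<epsilon>. 0 < \<epsilon> \<and> \<epsilon> \<le> e \<longrightarrow> P \<epsilon> y))" for x e U
  have "\<exists>e U. Q x e U" if "x \<in> K" for x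
    using local[OF that] unfolding Q_def eventually_nhds by blast
  then obtain e U where eU: "\<And>x. x \<in> K \<Longrightarrow> Q x (e x) (U x)"
    by metis
  have "open (U x)" if "x \<in> K" for x using eU[OF that] by (simp add: Q_def)
  moreover have "K \<subseteq> (\<Union>x\<in>K. U x)" using eU by (auto simp: Q_def)
  ultimately obtain C where C: "C \<subseteq> K" "finite C" "K \<subseteq> (\<Union>c\<in>C. U c)"
    by (rule compactE_image[OF assms(1)])
  define e0 where "e0 = Min (insert 1 (e ` C))"
  have "0 < e0" using C eU by (auto simp: e0_def Q_def)
  moreover have "P \<epsilon> y" if "y \<in> K" "0 < \<epsilon>" "\<epsilon> \<le> e0" for y \<epsilon>
  proof -
    obtain c where "c \<in> C" "y \<in> U c" using C \<open>y \<in> K\<close> by blast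
    moreover have "e0 \<le> e c" using C \<open>c \<in> C\<close> by (simp add: e0_def)
    ultimately show ?thesis using eU[of c] C that unfolding Q_def by auto
  qed
  ultimately show ?thesis by blast
qed

lemma stationary_pen_feasible_near:
  assumes Lf: "lipschitz_on_fibers Iz f L" and Lg: "\<forall>i\<in>{1..m}. lipschitz_on_fibers Iz (g i) L"
    and emfcq: "EMFCQ Iz l u g m" and x: "x \<in> boxX l u \<inter> intset Iz"
  shows "\<exists>e0>0. \<forall>\<^sub>F y in fiber_nhds Iz x.
           \<forall>e. 0 < e \<and> e \<le> e0 \<longrightarrow> stationary_pen Iz l u f g m e y \<longrightarrow> y \<in> feasF g m"
proof (cases "x \<in> interior (feasF g m)")
  case True
  have "\<forall>\<^sub>F y in nhds x. y \<in> interior (feasF g m)"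
    by (rule eventually_nhds_in_open[OF open_interior True])
  then have "\<forall>\<^sub>F y in fiber_nhds Iz x. y \<in> interior (feasF g m)"
    by (rule filter_leD[OF fiber_nhds_le_nhds])
  then have "\<forall>\<^sub>F y in fiber_nhds Iz x.
      \<forall>e. 0 < e \<and> e \<le> 1 \<longrightarrow> stationary_pen Iz l u f g m e y \<longrightarrow> y \<in> feasF g m"
    by (rule eventually_mono) (use interior_subset in blast)
  then show ?thesis by (intro exI[of _ 1]) simp
next
  case False
  with x have "x \<in> boxX l u \<inter> intset Iz - interior (feasF g m)" by blast
  then consider
      (dir) s where "s \<in> Dc Iz l u x"
        "\<forall>i\<in>{1..m}. 0 \<le> g i x \<longrightarrow> (\<forall>\<xi>\<in>subdiff_c Iz (g i) x. \<xi> \<bullet> s < 0)"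
    | (step) d where "d \<in> Dz Iz l u x" "viol g m (x + d) < viol g m x"
    using emfcq unfolding EMFCQ_def viol_def by blast
  then show ?thesis
  proof cases
    case dir
    then show ?thesis by (rule stationary_pen_feasible_near_of_descent_dir[OF Lf Lg])
  next
    case step
    then obtain e0 where "0 < e0"
      and none: "\<forall>\<^sub>F y in fiber_nhds Iz x. \<forall>e. 0 < e \<and> e \<le> e0 \<longrightarrow> \<not> stationary_pen Iz l u f g m e y"
      using no_stationary_pen_near_of_descent_step[OF Lf Lg] by blast
    from none have "\<forall>\<^sub>F y in fiber_nhds Iz x.
        \<forall>e. 0 < e \<and> e \<le> e0 \<longrightarrow> stationary_pen Iz l u f g m e y \<longrightarrow> y \<in> feasF g m"
      by (rule eventually_mono) blast
    with \<open>0 < e0\<close> show ?thesis by blast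
  qed
qed

lemma stationary_pen_feasible_nhds:
  assumes Lf: "lipschitz_on_fibers Iz f L" and Lg: "\<forall>i\<in>{1..m}. lipschitz_on_fibers Iz (g i) L"
    and emfcq: "EMFCQ Iz l u g m" and x: "x \<in> boxX l u \<inter> intset Iz"
  shows "\<exists>e0>0. \<forall>\<^sub>F y in nhds x. y \<in> boxX l u \<inter> intset Iz \<longrightarrow>
           (\<forall>e. 0 < e \<and> e \<le> e0 \<longrightarrow> stationary_pen Iz l u f g m e y \<longrightarrow> y \<in> feasF g m)"
proof -
  obtain e0 where "0 < e0" and near: "\<forall>\<^sub>F y in fiber_nhds Iz x.
      \<forall>e. 0 < e \<and> e \<le> e0 \<longrightarrow> stationary_pen Iz l u f g m e y \<longrightarrow> y \<in> feasF g m"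
    using stationary_pen_feasible_near[OF Lf Lg emfcq x] by blast
  from x have "x \<in> intset Iz" by blast
  from eventually_nhds_of_fiber_nhds[OF this near]
  have "\<forall>\<^sub>F y in nhds x. y \<in> boxX l u \<inter> intset Iz \<longrightarrow>
      (\<forall>e. 0 < e \<and> e \<le> e0 \<longrightarrow> stationary_pen Iz l u f g m e y \<longrightarrow> y \<in> feasF g m)"
    by (rule eventually_mono) blast
  with \<open>0 < e0\<close> show ?thesis by blast
qed

theorem mainTheorem10:
  fixes Iz :: "'n::finite set" and l u :: "real^'n"
    and f :: "real^'n \<Rightarrow> real" and g :: "nat \<Rightarrow> real^'n \<Rightarrow> real" and m :: nat and L :: real
  assumes lu: "\<forall>i. l$i < u$i"
    and lu_int: "\<forall>i\<in>Iz. l$i \<in> \<int> \<and> u$i \<in> \<int>"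
    and lip_f: "\<forall>x y. same_int_part Iz x y \<longrightarrow> \<bar>f x - f y\<bar> \<le> L * norm (x - y)"
    and lip_g: "\<forall>i\<in>{1..m}. \<forall>x y. same_int_part Iz x y \<longrightarrow> \<bar>g i x - g i y\<bar> \<le> L * norm (x - y)"
    and emfcq: "EMFCQ Iz l u g m"
  shows "\<exists>\<epsilon>s>0. \<forall>\<epsilon>. 0 < \<epsilon> \<and> \<epsilon> \<le> \<epsilon>s \<longrightarrow>
           (\<forall>x. stationary_pen Iz l u f g m \<epsilon> x \<longrightarrow> kkt_point Iz l u f g m x)"
proof -
  have Lf: "lipschitz_on_fibers Iz f L" using lip_f by (simp add: lipschitz_on_fibers_def)
  have Lg: "\<forall>i\<in>{1..m}. lipschitz_on_fibers Iz (g i) L" using lip_g by (simp add: lipschitz_on_fibers_def)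
  obtain \<epsilon>s where "0 < \<epsilon>s" and feasible: "\<forall>y\<in>boxX l u \<inter> intset Iz.
      \<forall>e. 0 < e \<and> e \<le> \<epsilon>s \<longrightarrow> stationary_pen Iz l u f g m e y \<longrightarrow> y \<in> feasF g m"
    using compact_uniform_threshold[OF compact_box_intset,
        where P = "\<lambda>e y. stationary_pen Iz l u f g m e y \<longrightarrow> y \<in> feasF g m"]
      stationary_pen_feasible_nhds[OF Lf Lg emfcq]
    by blast
  have "kkt_point Iz l u f g m x"
    if "0 < e" "e \<le> \<epsilon>s" "stationary_pen Iz l u f g m e x" for e x
    using feasible that stationary_pen_feasible_imp_kkt[OF Lf Lg] by (auto simp: stationary_pen_def)
  with \<open>0 < \<epsilon>s\<close> show ?thesis by blast
qed

end
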